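(* Let $A$ be a pca and $f:A\rightharpoonup A$ a partial function. Then the identity function $F=\mathrm{id}:A\to A[f]$ is computationally dense, and it satisfies condition (in): there are $m,c\in A$ such that $m$ witnesses computational density of $F$ and for every $b\in A$, $c\cdot^f b$ is defined and $m\cdot^f(c\cdot^f b)=b$.
   Context: A pca is a set $A$ with a partial binary application admitting $K,S$ with $Kab=a$, $Sab{\downarrow}$, $Sabc\simeq ac(bc)$. Each pca has fixed Booleans $\top,\bot$, pairing $p$ with projections $p_0,p_1$ ($p_0(pab)=a$, $p_1(pab)=b$), and a coding $[u_0,\dots,u_{n-1}]$ of finite sequences with concatenation $\ast$. For partial $f:A\rightharpoonup A$, the pca $A[f]$ has underlying set $A$ and application $\cdot^f$: an $f$-dialogue between $a,b$ is a code $u=[u_0,\dots,u_{n-1}]$ such that for each $i<n$ there is $v_i$ with $a\cdot([b]\ast[u_0,\dots,u_{i-1}])=p\bot v_i$ and $f(v_i)$ defined and equal to $u_i$; and $a\cdot^f b=c$ iff there is an $f$-dialogue $u$ between $a,b$ with $a\cdot([b]\ast u)=p\top c$. The map $a\mapsto\{a\}$ is an applicative morphism $A\to A[f]$. For pcas $A,B$ and a function $F:A\to B$ such that $a\mapsto\{F(a)\}$ is an applicative morphism, $F$ is computationally dense if there is $m\in B$ such that for every $b\in B$ there is $a\in A$ such that for all $a'\in A$: if $bF(a'){\downarrow}$ in $B$, then $aa'{\downarrow}$ in $A$ and $mF(aa')=bF(a')$ in $B$. Condition (in) (for such $F$ and $m$): there is $c\in B$ such that for every $b\in B$ there is $a\in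 A$ with $cb=F(a)$ and $m(cb)=b$. *)

theory Defs
  imports Main
begin

text \<open>A pca is given by a partial application on a type 'a together with a
  chosen pair of combinators K, S.  Kleene equality is equality of options.\<close>

definition is_pca :: "('a \<Rightarrow> 'a \<Rightarrow> 'a option) \<Rightarrow> 'a \<Rightarrow> 'a \<Rightarrow> bool" where
  "is_pca app k s \<longleftrightarrow>
     (\<forall>a b. \<exists>ka. app k a = Some ka \<and> app ka b = Some a) \<and>
     (\<forall>a b. \<exists>sa sab. app s a = Some sa \<and> app sa b = Some sab) \<and>
     (\<forall>a b c sa sab. app s a = Some sa \<longrightarrow> app sa b = Some sab \<longrightarrow>
        app sab c = (case app a c of None \<Rightarrow> None
                      | Some x \<Rightarrow> (case app b c of None \<Rightarrow> None
                                    | Some y \<Rightarrow> app x y)))"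

definition ap :: "('a \<Rightarrow> 'a \<Rightarrow> 'a option) \<Rightarrow> 'a option \<Rightarrow> 'a option \<Rightarrow> 'a option" where
  "ap app x y = (case x of None \<Rightarrow> None
                 | Some a \<Rightarrow> (case y of None \<Rightarrow> None | Some b \<Rightarrow> app a b))"

datatype 'a cterm = Var nat | Const 'a | App "'a cterm" "'a cterm"

fun ev :: "('a \<Rightarrow> 'a \<Rightarrow> 'a option) \<Rightarrow> 'a cterm \<Rightarrow> 'a option" where
  "ev app (Var n) = None"
| "ev app (Const a) = Some a"
| "ev app (App t u) = ap app (ev app t) (ev app u)"

fun lam :: "'a \<Rightarrow> 'a \<Rightarrow> nat \<Rightarrow> 'a cterm \<Rightarrow> 'a cterm" where
  "lam k s x (Var y) = (if x = y then App (App (Const s) (Const k)) (Const k)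
                        else App (Const k) (Var y))"
| "lam k s x (Const a) = App (Const k) (Const a)"
| "lam k s x (App t u) = App (App (Const s) (lam k s x t)) (lam k s x u)"

definition combI :: "('a \<Rightarrow> 'a \<Rightarrow> 'a option) \<Rightarrow> 'a \<Rightarrow> 'a \<Rightarrow> 'a" where
  "combI app k s = the (ev app (App (App (Const s) (Const k)) (Const k)))"

definition ptop :: "('a \<Rightarrow> 'a \<Rightarrow> 'a option) \<Rightarrow> 'a \<Rightarrow> 'a \<Rightarrow> 'a" where
  "ptop app k s = k"

definition pbot :: "('a \<Rightarrow> 'a \<Rightarrow> 'a option) \<Rightarrow> 'a \<Rightarrow> 'a \<Rightarrow> 'a" where
  "pbot app k s = the (app k (combI app k s))"

text \<open>Pairing p = \<lambda>x y z. z x y (projections p0 = \<lambda>x. x top, p1 = \<lambda>x. x bot).\<close>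
definition ppair :: "('a \<Rightarrow> 'a \<Rightarrow> 'a option) \<Rightarrow> 'a \<Rightarrow> 'a \<Rightarrow> 'a" where
  "ppair app k s = the (ev app (lam k s 0 (lam k s 1 (lam k s 2
                      (App (App (Var 2) (Var 0)) (Var 1))))))"

definition pr :: "('a \<Rightarrow> 'a \<Rightarrow> 'a option) \<Rightarrow> 'a \<Rightarrow> 'a \<Rightarrow> 'a \<Rightarrow> 'a \<Rightarrow> 'a" where
  "pr app k s a b = the (ap app (app (ppair app k s) a) (Some b))"

text \<open>Coding of finite sequences: [] = p top top, [x] * u = p bot (p x u).
  Hence [b] * [u0,...,u(i-1)] is  code (b # take i us).\<close>
fun code :: "('a \<Rightarrow> 'a \<Rightarrow> 'a option) \<Rightarrow> 'a \<Rightarrow> 'a \<Rightarrow> 'a list \<Rightarrow> 'a" where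
  "code app k s [] = pr app k s (ptop app k s) (ptop app k s)"
| "code app k s (x # xs) = pr app k s (pbot app k s) (pr app k s x (code app k s xs))"

definition is_dialogue ::
  "('a \<Rightarrow> 'a \<Rightarrow> 'a option) \<Rightarrow> 'a \<Rightarrow> 'a \<Rightarrow> ('a \<Rightarrow> 'a option) \<Rightarrow> 'a \<Rightarrow> 'a \<Rightarrow> 'a list \<Rightarrow> bool" where
  "is_dialogue app k s f a b us \<longleftrightarrow>
     (\<forall>i < length us. \<exists>v. app a (code app k s (b # take i us)) = Some (pr app k s (pbot app k s) v)
                          \<and> f v = Some (us ! i))"

text \<open>appf app k s f a b c  means  a \<cdot>^f b = c.\<close>
definition appf ::
  "('a \<Rightarrow> 'a \<Rightarrow> 'a option) \<Rightarrow> 'a \<Rightarrow> 'a \<Rightarrow> ('a \<Rightarrow> 'a option) \<Rightarrow> 'a \<Rightarrow> 'a \<Rightarrow> 'a \<Rightarrow> bool" where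
  "appf app k s f a b c \<longleftrightarrow>
     (\<exists>us. is_dialogue app k s f a b us \<and>
           app a (code app k s (b # us)) = Some (pr app k s (ptop app k s) c))"

text \<open>Application in A is a partial function; application in B is given as a
  relation appB b b' d meaning b b' = d.\<close>

definition sing_appl_morph ::
  "('a \<Rightarrow> 'a \<Rightarrow> 'a option) \<Rightarrow> ('b \<Rightarrow> 'b \<Rightarrow> 'b \<Rightarrow> bool) \<Rightarrow> ('a \<Rightarrow> 'b) \<Rightarrow> bool" where
  "sing_appl_morph appA appB F \<longleftrightarrow>
     (\<exists>r. \<forall>a a' e. appA a a' = Some e \<longrightarrow>
            (\<exists>d. appB r (F a) d \<and> appB d (F a') (F e)))"

definition comp_dense_wit ::
  "('a \<Rightarrow> 'a \<Rightarrow> 'a option) \<Rightarrow> ('b \<Rightarrow> 'b \<Rightarrow> 'b \<Rightarrow> bool) \<Rightarrow> ('a \<Rightarrow> 'b) \<Rightarrow> 'b \<Rightarrow> bool" where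
  "comp_dense_wit appA appB F m \<longleftrightarrow>
     (\<forall>b. \<exists>a. \<forall>a'. (\<exists>d. appB b (F a') d) \<longrightarrow>
        (\<exists>e. appA a a' = Some e \<and> (\<forall>d. appB b (F a') d \<longrightarrow> appB m (F e) d)))"

definition comp_dense ::
  "('a \<Rightarrow> 'a \<Rightarrow> 'a option) \<Rightarrow> ('b \<Rightarrow> 'b \<Rightarrow> 'b \<Rightarrow> bool) \<Rightarrow> ('a \<Rightarrow> 'b) \<Rightarrow> bool" where
  "comp_dense appA appB F \<longleftrightarrow>
     sing_appl_morph appA appB F \<and> (\<exists>m. comp_dense_wit appA appB F m)"

definition cond_in ::
  "('b \<Rightarrow> 'b \<Rightarrow> 'b \<Rightarrow> bool) \<Rightarrow> ('a \<Rightarrow> 'b) \<Rightarrow> 'b \<Rightarrow> bool" where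
  "cond_in appB F m \<longleftrightarrow> (\<exists>c. \<forall>b. \<exists>a. appB c b (F a) \<and> appB m (F a) b)"

end

theory Submission
  imports Defs
begin

text \<open>Every term built by bracket abstraction evaluates in A, so combinators of A can be
  written as \<open>\<lambda>\<close>-terms.  An element a whose answer on the first query [b] is already
  \<open>p \<top> c\<close> computes \<open>a \<cdot>\<^sup>f b = c\<close> without consulting the oracle; this gives the
  realizer of the applicative morphism and an identity q of A[f].  The density witness m
  decodes \<open>[p x y] * u\<close> to \<open>x \<cdot> ([y] * u)\<close>, so every f-dialogue between x and y is one
  between m and \<open>p x y\<close>: hence \<open>m \<cdot>\<^sup>f (p x y) \<simeq> x \<cdot>\<^sup>f y\<close>.  Density then holds with
  a := p b, and (in) with \<open>c \<cdot>\<^sup>f b = p q b\<close>.\<close>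

fun inst_cterm :: "(nat \<Rightarrow> 'a) \<Rightarrow> 'a cterm \<Rightarrow> 'a cterm" where
  "inst_cterm \<sigma> (Var n) = Const (\<sigma> n)"
| "inst_cterm \<sigma> (Const a) = Const a"
| "inst_cterm \<sigma> (App t u) = App (inst_cterm \<sigma> t) (inst_cterm \<sigma> u)"

fun vars_cterm :: "'a cterm \<Rightarrow> nat set" where
  "vars_cterm (Var n) = {n}"
| "vars_cterm (Const a) = {}"
| "vars_cterm (App t u) = vars_cterm t \<union> vars_cterm u"

lemma vars_cterm_lam: "vars_cterm (lam k s x t) = vars_cterm t - {x}"
  by (induction t) auto

lemma inst_cterm_closed: "vars_cterm t = {} \<Longrightarrow> inst_cterm \<sigma> t = t"
  by (induction t) auto

lemma ap_simps [simp]: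
  "ap app (Some a) (Some b) = app a b"
  "ap app None y = None"
  "ap app x None = None"
  by (auto simp: ap_def split: option.splits)

locale pca =
  fixes app :: "'a \<Rightarrow> 'a \<Rightarrow> 'a option" and k s :: 'a
  assumes is_pca: "is_pca app k s"
begin

lemma K_defined: "\<exists>ka. app k a = Some ka"
  using is_pca unfolding is_pca_def by blast

lemma K_app: "app k a = Some ka \<Longrightarrow> app ka b = Some a"
  using is_pca unfolding is_pca_def by (metis option.inject)

lemma S_defined: "\<exists>sa sab. app s a = Some sa \<and> app sa b = Some sab"
  using is_pca unfolding is_pca_def by blast

lemma S_app: "app s a = Some sa \<Longrightarrow> app sa b = Some sab \<Longrightarrow>
    app sab c = ap app (app a c) (app b c)"
  using is_pca unfolding is_pca_def ap_def by blast

lemma SKK_app: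
  assumes "app s k = Some sk" "app sk k = Some skk"
  shows "app skk a = Some a"
proof -
  obtain ka where ka: "app k a = Some ka" using K_defined by blast
  have "app skk a = ap app (app k a) (app k a)" by (rule S_app[OF assms])
  also have "\<dots> = Some a" using ka K_app[OF ka] by simp
  finally show ?thesis .
qed

lemma combI_app: "app (combI app k s) a = Some a"
proof -
  obtain sk skk where SKK: "app s k = Some sk" "app sk k = Some skk" using S_defined by blast
  then have "combI app k s = skk" by (simp add: combI_def)
  with SKK_app[OF SKK] show ?thesis by simp
qed

theorem lam_beta:
  "\<exists>w. ev app (inst_cterm \<sigma> (lam k s x t)) = Some w \<and>
        (\<forall>a. app w a = ev app (inst_cterm (\<sigma>(x := a)) t))"
proof (induction t arbitrary: \<sigma>)
  case (Var y)
  show ?case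
  proof (cases "x = y")
    case True
    obtain sk skk where SKK: "app s k = Some sk" "app sk k = Some skk" using S_defined by blast
    with True show ?thesis using SKK_app[OF SKK] by simp
  next
    case False
    obtain ka where ka: "app k (\<sigma> y) = Some ka" using K_defined by blast
    with False show ?thesis using K_app[OF ka] by simp
  qed
next
  case (Const c)
  obtain ka where ka: "app k c = Some ka" using K_defined by blast
  then show ?case using K_app[OF ka] by simp
next
  case (App t u)
  obtain wt where t: "ev app (inst_cterm \<sigma> (lam k s x t)) = Some wt"
    "\<forall>a. app wt a = ev app (inst_cterm (\<sigma>(x := a)) t)" using App.IH(1) by blast
  obtain wu where u: "ev app (inst_cterm \<sigma> (lam k s x u)) = Some wu"
    "\<forall>a. app wu a = ev app (inst_cterm (\<sigma>(x := a)) u)" using App.IH(2) by blast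
  obtain sa sab where S: "app s wt = Some sa" "app sa wu = Some sab" using S_defined by blast
  have "ev app (inst_cterm \<sigma> (lam k s x (App t u))) = Some sab" using t u S by simp
  moreover have "app sab a = ev app (inst_cterm (\<sigma>(x := a)) (App t u))" for a
    using S_app[OF S, of a] t(2) u(2) by simp
  ultimately show ?case by blast
qed

corollary lam_beta_closed:
  assumes "vars_cterm t \<subseteq> {x}"
  shows "\<exists>w. ev app (lam k s x t) = Some w \<and>
        (\<forall>a. app w a = ev app (inst_cterm ((\<lambda>_. k)(x := a)) t))"
proof -
  have "vars_cterm (lam k s x t) = {}" using assms by (auto simp: vars_cterm_lam)
  then have "inst_cterm (\<lambda>_. k) (lam k s x t) = lam k s x t" by (rule inst_cterm_closed)
  then show ?thesis using lam_beta[of "\<lambda>_. k" x t] by simp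
qed

definition lam0 :: "'a cterm \<Rightarrow> 'a" where
  "lam0 t = the (ev app (inst_cterm (\<lambda>_. k) (lam k s 0 t)))"

lemma lam0_app: "app (lam0 t) a = ev app (inst_cterm ((\<lambda>_. k)(0 := a)) t)"
  using lam_beta[of "\<lambda>_. k" 0 t] by (auto simp: lam0_def)

abbreviation P where "P \<equiv> ppair app k s"
abbreviation pair where "pair \<equiv> pr app k s"
abbreviation bot where "bot \<equiv> pbot app k s"

lemma ptop_eq [simp]: "ptop app k s = k"
  by (simp add: ptop_def)

lemma ppair_beta:
  "\<exists>pb. app P b = Some pb \<and> (\<forall>c. \<exists>pbc. app pb c = Some pbc \<and>
     (\<forall>z. app pbc z = ap app (app z b) (Some c)))"
proof -
  define T :: "'a cterm" where "T = App (App (Var 2) (Var 0)) (Var 1)"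
  have "vars_cterm (lam k s 1 (lam k s 2 T)) \<subseteq> {0}" by (auto simp: vars_cterm_lam T_def)
  then obtain w where w: "ev app (lam k s 0 (lam k s 1 (lam k s 2 T))) = Some w"
    "\<forall>a. app w a = ev app (inst_cterm ((\<lambda>_. k)(0 := a)) (lam k s 1 (lam k s 2 T)))"
    using lam_beta_closed by blast
  have "P = w" using w(1) by (simp add: ppair_def T_def)
  obtain w1 where w1: "ev app (inst_cterm ((\<lambda>_. k)(0 := b)) (lam k s 1 (lam k s 2 T))) = Some w1"
    "\<forall>c. app w1 c = ev app (inst_cterm ((\<lambda>_. k)(0 := b, 1 := c)) (lam k s 2 T))"
    using lam_beta by blast
  have "\<exists>pbc. app w1 c = Some pbc \<and> (\<forall>z. app pbc z = ap app (app z b) (Some c))" for c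
  proof -
    obtain w2 where "ev app (inst_cterm ((\<lambda>_. k)(0 := b, 1 := c)) (lam k s 2 T)) = Some w2"
      "\<forall>z. app w2 z = ev app (inst_cterm ((\<lambda>_. k)(0 := b, 1 := c, 2 := z)) T)"
      using lam_beta by blast
    then show ?thesis using w1 by (simp add: T_def)
  qed
  then show ?thesis using \<open>P = w\<close> w w1 by auto
qed

lemma pair_app: "app (pair b c) z = ap app (app z b) (Some c)"
proof -
  obtain pb pbc where "app P b = Some pb" "app pb c = Some pbc"
    "\<forall>z. app pbc z = ap app (app z b) (Some c)"
    using ppair_beta[of b] by blast
  then show ?thesis by (simp add: pr_def)
qed

lemma ap_ppair [simp]: "ap app (app P b) (Some c) = Some (pair b c)"
proof -
  obtain pb where pb: "app P b = Some pb" "\<forall>c. \<exists>pbc. app pb c = Some pbc"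
    using ppair_beta[of b] by blast
  then obtain pbc where "app pb c = Some pbc" by blast
  with pb show ?thesis by (simp add: pr_def)
qed

lemma ppair_app_total: "\<exists>pb. app P b = Some pb \<and> (\<forall>c. app pb c = Some (pair b c))"
  using ap_ppair[of b] by (cases "app P b") auto

lemma pair_fst [simp]: "app (pair b c) k = Some b"
proof -
  obtain kb where kb: "app k b = Some kb" using K_defined by blast
  then show ?thesis using K_app[OF kb] by (simp add: pair_app)
qed

lemma pair_snd [simp]: "app (pair b c) bot = Some c"
proof -
  obtain ki where ki: "app k (combI app k s) = Some ki" using K_defined by blast
  then have "bot = ki" by (simp add: pbot_def)
  then show ?thesis using K_app[OF ki, of b] combI_app by (simp add: pair_app)
qed

abbreviation PairT where "PairT t u \<equiv> App (App (Const P) t) u"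
abbreviation FstT where "FstT t \<equiv> App t (Const k)"
abbreviation SndT where "SndT t \<equiv> App t (Const bot)"

lemma appf_immediate:
  assumes "app a (code app k s [b]) = Some (pair k c)"
  shows "appf app k s f a b c"
  unfolding appf_def is_dialogue_def using assms by (intro exI[of _ "[]"]) simp

text \<open>On \<open>u = [p x y] * w = p \<bottom> (p (p x y) w)\<close> this evaluates to
  \<open>x (p \<bottom> (p y w)) = x ([y] * w)\<close>.\<close>
definition apply_pair :: 'a where
  "apply_pair = lam0 (App (FstT (FstT (SndT (Var 0))))
     (PairT (Const bot) (PairT (SndT (FstT (SndT (Var 0)))) (SndT (SndT (Var 0))))))"

lemma apply_pair_code:
  "app apply_pair (code app k s (pair x y # us)) = app x (code app k s (y # us))"
  by (simp add: apply_pair_def lam0_app)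

lemma is_dialogue_apply_pair:
  "is_dialogue app k s f apply_pair (pair x y) us = is_dialogue app k s f x y us"
  unfolding is_dialogue_def by (simp only: apply_pair_code)

lemma appf_apply_pair:
  "appf app k s f apply_pair (pair x y) d = appf app k s f x y d"
  unfolding appf_def by (simp only: apply_pair_code is_dialogue_apply_pair)

lemma comp_dense_wit_apply_pair: "comp_dense_wit app (appf app k s f) id apply_pair"
  unfolding comp_dense_wit_def
proof
  fix b
  obtain pb where "\<forall>c. app pb c = Some (pair b c)" using ppair_app_total by blast
  then show "\<exists>a. \<forall>a'. (\<exists>d. appf app k s f b (id a') d) \<longrightarrow>
      (\<exists>e. app a a' = Some e \<and> (\<forall>d. appf app k s f b (id a') d \<longrightarrow> appf app k s f apply_pair (id e) d))"
    using appf_apply_pair by (intro exI[of _ pb]) auto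
qed

text \<open>On \<open>[a]\<close> it answers \<open>p \<top> d\<close>, where d answers \<open>p \<top> (a a')\<close> on \<open>[a']\<close>.\<close>
definition morph_realizer :: 'a where
  "morph_realizer = lam0 (PairT (Const k)
     (lam k s 1 (PairT (Const k) (App (FstT (SndT (Var 0))) (FstT (SndT (Var 1)))))))"

lemma sing_appl_morph_id: "sing_appl_morph app (appf app k s f) id"
  unfolding sing_appl_morph_def
proof (rule exI[of _ morph_realizer], intro allI impI)
  fix a a' e
  assume e: "app a a' = Some e"
  define \<sigma> :: "nat \<Rightarrow> 'a" where "\<sigma> = (\<lambda>_. k)(0 := code app k s [a])"
  obtain d where d: "ev app (inst_cterm \<sigma>
      (lam k s 1 (PairT (Const k) (App (FstT (SndT (Var 0))) (FstT (SndT (Var 1))))))) = Some d"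
    "\<forall>v. app d v = ev app (inst_cterm (\<sigma>(1 := v))
      (PairT (Const k) (App (FstT (SndT (Var 0))) (FstT (SndT (Var 1))))))"
    using lam_beta by blast
  have "appf app k s f morph_realizer a d"
    by (rule appf_immediate) (use d(1) in \<open>simp add: morph_realizer_def lam0_app \<sigma>_def\<close>)
  moreover have "appf app k s f d a' e"
    by (rule appf_immediate) (use d(2) e in \<open>simp add: \<sigma>_def\<close>)
  ultimately show "\<exists>d. appf app k s f morph_realizer (id a) d \<and> appf app k s f d (id a') (id e)"
    by auto
qed

definition idf :: 'a where
  "idf = lam0 (PairT (Const k) (FstT (SndT (Var 0))))"

lemma appf_idf: "appf app k s f idf b b"
  by (rule appf_immediate) (simp add: idf_def lam0_app)

definition pair_idf :: 'a where
  "pair_idf = lam0 (PairT (Const k) (PairT (Const idf) (FstT (SndT (Var 0)))))"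

lemma appf_pair_idf: "appf app k s f pair_idf b (pair idf b)"
  by (rule appf_immediate) (simp add: pair_idf_def lam0_app)

lemma cond_in_apply_pair: "cond_in (appf app k s f) id apply_pair"
  unfolding cond_in_def
proof (rule exI[of _ pair_idf], rule allI)
  fix b
  show "\<exists>a. appf app k s f pair_idf b (id a) \<and> appf app k s f apply_pair (id a) b"
    using appf_pair_idf appf_apply_pair appf_idf by (intro exI[of _ "pair idf b"]) simp
qed

end

theorem mainTheorem9:
  fixes app :: "'a \<Rightarrow> 'a \<Rightarrow> 'a option" and k s :: 'a and f :: "'a \<Rightarrow> 'a option"
  assumes "is_pca app k s"
  shows "comp_dense app (appf app k s f) id \<and>
         (\<exists>m. comp_dense_wit app (appf app k s f) id m \<and> cond_in (appf app k s f) id m)"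
proof -
  interpret pca app k s by (rule pca.intro[OF assms])
  show ?thesis
    using sing_appl_morph_id comp_dense_wit_apply_pair cond_in_apply_pair
    unfolding comp_dense_def by blast
qed

end
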